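(* Consider the geometric Brownian motion storage model $dX_0=-\mu X_0\,dt+\sigma X_0\,dW$ on $\mathcal E=(0,\infty)$ with $\mu,\sigma>0$, holding cost $c_0(x)=k_3x$ ($k_3>0$), and any ordering cost $c_1:\{(y,z):0<y\le z\}\to[0,\infty]$ that is continuous, satisfies $c_1\ge k_1>0$, has $c_1(\cdot,z)$ continuously differentiable near $0$ for each $z$ and $c_1(y,\cdot)$ continuously differentiable near $\infty$ for each $y$, and for which $\lim_{y\to0}c_1(y,z)<\infty$ for some $z>0$. Then $\inf\{F_0(y,z):0<y\le z\}=0$ and there is no pair $0<y<z$ minimizing $F_0$; that is, no $(y,z)$ ordering policy attains the infimal $(s,S)$ cost.
   Context: $W$ is a standard Brownian motion, $x_0>0$. Scale density $s(x)=x^{2\mu/\sigma^2}$ and speed density $m(x)=\sigma^{-2}x^{-2-2\mu/\sigma^2}$, with scale measure $dS=s\,dx$ and speed measure $dM=m\,dx$. Define $g_0(x)=\int_{x_0}^x\int_u^\infty2c_0(v)\,dM(v)\,dS(u)$, $\zeta(x)=\int_{x_0}^x2M[u,\infty)\,dS(u)$, and $F_0(y,z)=\frac{c_1(y,z)+g_0(z)-g_0(y)}{\zeta(z)-\zeta(y)}$ for $0<y<z$, $F_0(y,y)=\infty$. For the $(y,z)$ ordering policy (order up to $z$ whenever the level falls to $y$), $F_0(y,z)$ is its long-term average cost. *)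

theory Defs
  imports "HOL-Analysis.Analysis"
begin

text \<open>Geometric Brownian motion dX = -mu X dt + sigma X dW on (0,inf).\<close>

definition scale_dens :: "real \<Rightarrow> real \<Rightarrow> real \<Rightarrow> real" where
  "scale_dens mu sig x = x powr (2 * mu / sig\<^sup>2)"

definition speed_dens :: "real \<Rightarrow> real \<Rightarrow> real \<Rightarrow> real" where
  "speed_dens mu sig x = (1 / sig\<^sup>2) * x powr (-2 - 2 * mu / sig\<^sup>2)"

definition g0 :: "real \<Rightarrow> real \<Rightarrow> (real \<Rightarrow> real) \<Rightarrow> real \<Rightarrow> real \<Rightarrow> real" where
  "g0 mu sig c0 x0 x =
     (LBINT u = ereal x0..ereal x.
        (LBINT v = ereal u..\<infinity>. 2 * c0 v * speed_dens mu sig v) * scale_dens mu sig u)"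

definition zeta :: "real \<Rightarrow> real \<Rightarrow> real \<Rightarrow> real \<Rightarrow> real" where
  "zeta mu sig x0 x =
     (LBINT u = ereal x0..ereal x.
        2 * (LBINT v = ereal u..\<infinity>. speed_dens mu sig v) * scale_dens mu sig u)"

text \<open>Long-term average cost of the (y,z) ordering policy; ordering cost c1 may be +inf.\<close>
definition F0 :: "real \<Rightarrow> real \<Rightarrow> (real \<Rightarrow> real) \<Rightarrow> (real \<Rightarrow> real \<Rightarrow> ereal) \<Rightarrow> real
                   \<Rightarrow> real \<Rightarrow> real \<Rightarrow> ereal" where
  "F0 mu sig c0 c1 x0 y z =
     (if y < z then (c1 y z + ereal (g0 mu sig c0 x0 z - g0 mu sig c0 x0 y))
                      / ereal (zeta mu sig x0 z - zeta mu sig x0 y)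
      else \<infinity>)"

definition C1_near_zero :: "(real \<Rightarrow> ereal) \<Rightarrow> real \<Rightarrow> bool" where
  "C1_near_zero f z \<longleftrightarrow> (\<exists>\<delta>>0. \<exists>d. 
      (\<forall>y\<in>{0<..<\<delta>} \<inter> {0<..z}. f y \<noteq> \<infinity> \<and> f y \<noteq> -\<infinity> \<and>
          ((\<lambda>t. real_of_ereal (f t)) has_real_derivative d y) (at y within {0<..z}))
      \<and> continuous_on ({0<..<\<delta>} \<inter> {0<..z}) d)"

definition C1_near_infty :: "(real \<Rightarrow> ereal) \<Rightarrow> real \<Rightarrow> bool" where
  "C1_near_infty f y \<longleftrightarrow> (\<exists>N. \<exists>d.
      (\<forall>z\<in>{N<..} \<inter> {y..}. f z \<noteq> \<infinity> \<and> f z \<noteq> -\<infinity> \<and>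
          ((\<lambda>t. real_of_ereal (f t)) has_real_derivative d z) (at z within {y..}))
      \<and> continuous_on ({N<..} \<inter> {y..}) d)"

end

theory Submission
  imports Defs
begin

text \<open>For linear holding cost both integrals defining F0 are explicit: g0 is
linear and zeta is logarithmic, so
  F0(y,z) = (c1(y,z) + k3/mu (z - y)) / (2/(sig^2 + 2 mu) (ln z - ln y)).
Fixing z with c1(., z) bounded near 0 and letting y tend to 0, the numerator stays bounded
while the denominator tends to infinity, so the infimum is 0. Since c1 \<ge> k1 > 0, every
value of F0 is positive, hence the infimum is not attained.\<close>

lemma interval_integral_powr_at_top:
  fixes u q :: real
  assumes u: "u > 0" and q: "q > 0"
  shows "(LBINT v = ereal u..\<infinity>. v powr (-1-q)) = u powr (-q) / q"
proof -
  define F where "F = (\<lambda>v::real. - (v powr (-q)) / q)"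
  have "(LBINT v = ereal u..\<infinity>. v powr (-1-q)) = 0 - F u"
  proof (rule interval_integral_FTC_nonneg)
    fix x assume "ereal u < ereal x"
    hence x: "x > 0" using u by simp
    have exponent: "-q - 1 = -1 - q" by simp
    show "DERIV F x :> x powr (-1-q)"
      unfolding F_def using x q by (auto intro!: derivative_eq_intros simp: exponent)
    show "isCont (\<lambda>v. v powr (-1-q)) x" using x by (auto intro!: continuous_intros)
  next
    have "isCont F u" unfolding F_def using u q by (intro continuous_intros) auto
    hence "(F \<longlongrightarrow> F u) (at_right u)"
      by (simp add: isCont_def filterlim_at_split)
    thus "((F \<circ> real_of_ereal) \<longlongrightarrow> F u) (at_right (ereal u))"
      unfolding ereal_tendsto_simps1 .
    have "((\<lambda>v::real. v powr (-q)) \<longlongrightarrow> 0) at_top"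
      using q by (intro tendsto_neg_powr filterlim_ident) auto
    hence "(F \<longlongrightarrow> - 0 / q) at_top"
      unfolding F_def by (intro tendsto_intros) (use q in auto)
    thus "((F \<circ> real_of_ereal) \<longlongrightarrow> 0) (at_left \<infinity>)"
      unfolding ereal_tendsto_simps1 by simp
  qed auto
  thus ?thesis by (simp add: F_def)
qed

lemma interval_integral_inverse:
  fixes a b c :: real
  assumes a: "a > 0" and b: "b > 0"
  shows "(LBINT u = ereal a..ereal b. c / u) = c * (ln b - ln a)"
proof -
  have "(LBINT u = ereal a..ereal b. c / u) = c * ln b - c * ln a"
  proof (rule interval_integral_FTC_finite)
    show "continuous_on {min a b..max a b} (\<lambda>u. c / u)"
      using a b by (intro continuous_intros) auto
    fix x assume "min a b \<le> x" "x \<le> max a b"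
    hence "x > 0" using a b by linarith
    thus "((\<lambda>u. c * ln u) has_vector_derivative c / x) (at x within {min a b..max a b})"
      by (auto intro!: derivative_eq_intros
               simp: has_real_derivative_iff_has_vector_derivative[symmetric])
  qed
  thus ?thesis by (simp add: algebra_simps)
qed

lemma g0_linear_cost:
  fixes mu sig k3 x0 x :: real
  assumes mu: "mu > 0" and sig: "sig > 0" and x0: "x0 > 0" and x: "x > 0"
  shows "g0 mu sig (\<lambda>x. k3 * x) x0 x = k3 / mu * (x - x0)"
proof -
  define a where "a = 2 * mu / sig\<^sup>2"
  have a: "a > 0" unfolding a_def using mu sig by simp
  have inner: "(LBINT v = ereal u..\<infinity>. 2 * (k3 * v) * speed_dens mu sig v)
                 = 2 * k3 / sig\<^sup>2 * (u powr (-a) / a)" if u: "u > 0" for u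
  proof -
    have "(LBINT v = ereal u..\<infinity>. 2 * (k3 * v) * speed_dens mu sig v)
        = (LBINT v = ereal u..\<infinity>. 2 * k3 / sig\<^sup>2 * v powr (-1-a))"
    proof (rule interval_integral_cong)
      fix v assume "v \<in> einterval (min (ereal u) \<infinity>) (max (ereal u) \<infinity>)"
      hence "v > 0" using u by (simp add: einterval_iff)
      hence "v * v powr (-2-a) = v powr (-1-a)"
        by (simp add: powr_add[symmetric] powr_mult_base)
      thus "2 * (k3 * v) * speed_dens mu sig v = 2 * k3 / sig\<^sup>2 * v powr (-1-a)"
        unfolding speed_dens_def a_def by (simp add: field_simps)
    qed
    also have "\<dots> = 2 * k3 / sig\<^sup>2 * (u powr (-a) / a)"
      using interval_integral_powr_at_top[OF u a] by simp
    finally show ?thesis .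
  qed
  have "g0 mu sig (\<lambda>x. k3 * x) x0 x = (LBINT u = ereal x0..ereal x. k3 / mu)"
    unfolding g0_def
  proof (rule interval_integral_cong)
    fix u assume "u \<in> einterval (min (ereal x0) (ereal x)) (max (ereal x0) (ereal x))"
    hence u: "u > 0" using x0 x by (auto simp: einterval_iff min_def split: if_splits)
    have "u powr (-a) * u powr a = 1" using u by (simp add: powr_add[symmetric])
    hence "2 * k3 / sig\<^sup>2 * (u powr (-a) / a) * u powr a = k3 / mu"
      using sig mu unfolding a_def by (simp add: field_simps)
    thus "(LBINT v = ereal u..\<infinity>. 2 * (k3 * v) * speed_dens mu sig v) * scale_dens mu sig u
            = k3 / mu"
      using inner[OF u] unfolding scale_dens_def a_def by simp
  qed
  also have "\<dots> = k3 / mu * (x - x0)" by simp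
  finally show ?thesis .
qed

lemma zeta_gbm:
  fixes mu sig x0 x :: real
  assumes mu: "mu > 0" and sig: "sig > 0" and x0: "x0 > 0" and x: "x > 0"
  shows "zeta mu sig x0 x = 2 / (sig\<^sup>2 + 2 * mu) * (ln x - ln x0)"
proof -
  define a where "a = 2 * mu / sig\<^sup>2"
  have a: "1 + a > 0" unfolding a_def using mu sig by (simp add: add_pos_pos)
  have sig_a: "a * sig\<^sup>2 = 2 * mu" unfolding a_def using sig by simp
  have inner: "(LBINT v = ereal u..\<infinity>. speed_dens mu sig v)
                 = 1 / sig\<^sup>2 * (u powr (-(1+a)) / (1+a))" if u: "u > 0" for u
  proof -
    have "speed_dens mu sig = (\<lambda>v. 1 / sig\<^sup>2 * v powr (-1-(1+a)))"
      unfolding speed_dens_def a_def by (simp add: algebra_simps)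
    thus ?thesis using interval_integral_powr_at_top[OF u a] by simp
  qed
  have "zeta mu sig x0 x = (LBINT u = ereal x0..ereal x. (2 / (sig\<^sup>2 + 2 * mu)) / u)"
    unfolding zeta_def
  proof (rule interval_integral_cong)
    fix u assume "u \<in> einterval (min (ereal x0) (ereal x)) (max (ereal x0) (ereal x))"
    hence u: "u > 0" using x0 x by (auto simp: einterval_iff min_def split: if_splits)
    have "u powr (-(1+a)) * u powr a = 1 / u"
      using u by (simp add: powr_add[symmetric] powr_minus_divide)
    hence "2 * (1 / sig\<^sup>2 * (u powr (-(1+a)) / (1+a))) * u powr a = (2 / (sig\<^sup>2 + 2 * mu)) / u"
      using a sig sig_a by (simp add: field_simps)
    thus "2 * (LBINT v = ereal u..\<infinity>. speed_dens mu sig v) * scale_dens mu sig u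
            = (2 / (sig\<^sup>2 + 2 * mu)) / u"
      using inner[OF u] unfolding scale_dens_def a_def by simp
  qed
  also have "\<dots> = 2 / (sig\<^sup>2 + 2 * mu) * (ln x - ln x0)"
    by (rule interval_integral_inverse[OF x0 x])
  finally show ?thesis .
qed

lemma F0_linear_cost:
  fixes mu sig k3 x0 y z :: real
  assumes mu: "mu > 0" and sig: "sig > 0" and x0: "x0 > 0" and y: "y > 0" and yz: "y < z"
  shows "F0 mu sig (\<lambda>x. k3 * x) c1 x0 y z =
     (c1 y z + ereal (k3 / mu * (z - y))) / ereal (2 / (sig\<^sup>2 + 2 * mu) * (ln z - ln y))"
proof -
  have z: "z > 0" using y yz by simp
  show ?thesis
    unfolding F0_def
    using yz g0_linear_cost[OF mu sig x0 z, of k3] g0_linear_cost[OF mu sig x0 y, of k3]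
      zeta_gbm[OF mu sig x0 z] zeta_gbm[OF mu sig x0 y]
    by (simp add: right_diff_distrib)
qed

lemma F0_linear_cost_pos:
  fixes mu sig k1 k3 x0 y z :: real
  assumes mu: "mu > 0" and sig: "sig > 0" and x0: "x0 > 0" and k3: "k3 > 0" and k1: "k1 > 0"
    and y: "y > 0" and yz: "y \<le> z" and c1_lb: "ereal k1 \<le> c1 y z"
  shows "F0 mu sig (\<lambda>x. k3 * x) c1 x0 y z > 0"
proof (cases "y < z")
  case False
  thus ?thesis unfolding F0_def by simp
next
  case True
  define D where "D = 2 / (sig\<^sup>2 + 2 * mu) * (ln z - ln y)"
  have D: "D > 0" unfolding D_def using sig mu y True by (simp add: add_pos_pos)
  define N where "N = c1 y z + ereal (k3 / mu * (z - y))"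
  have "0 \<le> k3 / mu * (z - y)" using k3 mu True by simp
  hence "ereal k1 \<le> N"
    unfolding N_def using add_mono[OF c1_lb, of 0] by simp
  hence "N / ereal D > 0" using k1 D by (cases N) auto
  thus ?thesis using F0_linear_cost[OF mu sig x0 y True] unfolding N_def D_def by simp
qed

lemma tendsto_divide_ln_at_right_0:
  fixes C z :: real
  assumes C: "C > 0" and f: "(f \<longlongrightarrow> a) (at_right 0)"
  shows "((\<lambda>y. f y / (C * (ln z - ln y))) \<longlongrightarrow> 0) (at_right 0)"
proof (rule tendsto_divide_0[OF f])
  have "filterlim (\<lambda>y. - ln y) at_top (at_right (0::real))"
    by (simp add: filterlim_uminus_at_top ln_at_0)
  from filterlim_tendsto_add_at_top[OF tendsto_const this]
  have "filterlim (\<lambda>y. ln z - ln y) at_top (at_right (0::real))" by simp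
  hence "filterlim (\<lambda>y. C * (ln z - ln y)) at_top (at_right (0::real))"
    by (rule filterlim_tendsto_pos_mult_at_top[OF tendsto_const C])
  thus "filterlim (\<lambda>y. C * (ln z - ln y)) at_infinity (at_right (0::real))"
    by (rule filterlim_at_top_imp_at_infinity)
qed

lemma INF_F0_linear_cost_le_0:
  fixes mu sig k3 x0 z L :: real
  assumes mu: "mu > 0" and sig: "sig > 0" and x0: "x0 > 0" and z: "z > 0"
    and lim: "((\<lambda>y. c1 y z) \<longlongrightarrow> ereal L) (at_right 0)"
  shows "(INF p \<in> {(y, z). 0 < y \<and> y \<le> z}. F0 mu sig (\<lambda>x. k3 * x) c1 x0 (fst p) (snd p)) \<le> 0"
    (is "?inf \<le> 0")
proof -
  define C where "C = 2 / (sig\<^sup>2 + 2 * mu)"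
  have C: "C > 0" unfolding C_def using sig mu by (simp add: add_pos_pos)
  define bound where "bound y = (L + 1 + k3 / mu * (z - y)) / (C * (ln z - ln y))" for y
  have "(bound \<longlongrightarrow> 0) (at_right 0)"
    unfolding bound_def by (rule tendsto_divide_ln_at_right_0[OF C]) (use mu in \<open>auto intro!: tendsto_eq_intros\<close>)
  hence "((\<lambda>y. ereal (bound y)) \<longlongrightarrow> 0) (at_right 0)"
    by (simp add: zero_ereal_def)
  moreover have "eventually (\<lambda>y. ?inf \<le> ereal (bound y)) (at_right 0)"
  proof -
    have "eventually (\<lambda>y. c1 y z < ereal (L + 1)) (at_right 0)"
      using lim by (rule order_tendstoD) simp
    with eventually_at_right_real[OF z] show ?thesis
  proof eventually_elim
    case (elim y)
    hence y: "0 < y" "y < z" by auto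
    have "?inf \<le> F0 mu sig (\<lambda>x. k3 * x) c1 x0 y z"
      by (rule INF_lower2[of "(y, z)"]) (use y in auto)
    also have "\<dots> = (c1 y z + ereal (k3 / mu * (z - y))) / ereal (C * (ln z - ln y))"
      unfolding C_def by (rule F0_linear_cost[OF mu sig x0 y])
    also have "\<dots> \<le> (ereal (L + 1) + ereal (k3 / mu * (z - y))) / ereal (C * (ln z - ln y))"
      using elim C y by (intro ereal_divide_right_mono add_right_mono) auto
    also have "\<dots> = ereal (bound y)"
      unfolding bound_def using C y by simp
    finally show ?case .
  qed
  qed
  ultimately show ?thesis by (rule tendsto_lowerbound) simp
qed

theorem theorem6p7:
  fixes mu sig k1 k3 x0 :: real and c1 :: "real \<Rightarrow> real \<Rightarrow> ereal"
  assumes mu: "mu > 0" and sig: "sig > 0" and k3: "k3 > 0" and x0: "x0 > 0"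
    and k1: "k1 > 0"
    and c1_cont: "continuous_on {(y, z). 0 < y \<and> y \<le> z} (\<lambda>(y, z). c1 y z)"
    and c1_lb: "\<And>y z. 0 < y \<Longrightarrow> y \<le> z \<Longrightarrow> ereal k1 \<le> c1 y z"
    and c1_zero: "\<And>z. 0 < z \<Longrightarrow> C1_near_zero (\<lambda>y. c1 y z) z"
    and c1_infty: "\<And>y. 0 < y \<Longrightarrow> C1_near_infty (\<lambda>z. c1 y z) y"
    and c1_lim: "\<exists>z>0. \<exists>L::real. ((\<lambda>y. c1 y z) \<longlongrightarrow> ereal L) (at_right 0)"
  shows "(INF p \<in> {(y, z). 0 < y \<and> y \<le> z}.
            F0 mu sig (\<lambda>x. k3 * x) c1 x0 (fst p) (snd p)) = 0 \<and>
         \<not> (\<exists>y z. 0 < y \<and> y < z \<and>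
            (\<forall>y' z'. 0 < y' \<and> y' \<le> z' \<longrightarrow>
               F0 mu sig (\<lambda>x. k3 * x) c1 x0 y z \<le> F0 mu sig (\<lambda>x. k3 * x) c1 x0 y' z'))"
proof -
  let ?F = "F0 mu sig (\<lambda>x. k3 * x) c1 x0"
  let ?inf = "INF p \<in> {(y, z). 0 < y \<and> y \<le> z}. ?F (fst p) (snd p)"
  have pos: "0 < ?F y z" if "0 < y" "y \<le> z" for y z
    by (rule F0_linear_cost_pos[OF mu sig x0 k3 k1 that]) (rule c1_lb[OF that])
  obtain z L where "z > 0" "((\<lambda>y. c1 y z) \<longlongrightarrow> ereal L) (at_right 0)"
    using c1_lim by blast
  hence inf_le: "?inf \<le> 0" by (rule INF_F0_linear_cost_le_0[OF mu sig x0])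
  have inf_eq: "?inf = 0"
    by (intro antisym[OF inf_le] INF_greatest) (auto intro: less_imp_le[OF pos])
  moreover have "\<not> (\<exists>y z. 0 < y \<and> y < z \<and>
                 (\<forall>y' z'. 0 < y' \<and> y' \<le> z' \<longrightarrow> ?F y z \<le> ?F y' z'))"
  proof
    assume "\<exists>y z. 0 < y \<and> y < z \<and>
              (\<forall>y' z'. 0 < y' \<and> y' \<le> z' \<longrightarrow> ?F y z \<le> ?F y' z')"
    then obtain y z where yz: "0 < y" "y < z"
      and minimal: "\<forall>y' z'. 0 < y' \<and> y' \<le> z' \<longrightarrow> ?F y z \<le> ?F y' z'"
      by blast
    have "?F y z \<le> ?inf" using minimal by (auto intro!: INF_greatest)
    with inf_eq pos[of y z] yz show False by simp
  qed
  ultimately show ?thesis by blast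
qed

end
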